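(* Let $M$ be a manifold. Then $\mathsf{L}(M,\mathbb{R})$ holds.
   Context: All spaces are Hausdorff and maps continuous. A manifold is a connected Hausdorff space locally homeomorphic to $\mathbb{R}^n$. For a non-Lindelöf space $X$ and a space $Y$, $\mathsf{L}(X,Y)$ means: for every continuous $f:X\to Y$ there is a Lindelöf $Z\subset X$ with $f(Z)=f(X)$. (For Lindelöf $X$ the property is regarded as trivially true.) *)

theory Defs
  imports "HOL-Analysis.Analysis"
begin

definition manifold :: "'a topology \<Rightarrow> nat \<Rightarrow> bool" where
  "manifold M n \<longleftrightarrow> connected_space M \<and> Hausdorff_space M \<and>
     (\<forall>x \<in> topspace M. \<exists>U. openin M U \<and> x \<in> U \<and>
         subtopology M U homeomorphic_space Euclidean_space n)"

definition property_L :: "'a topology \<Rightarrow> 'b topology \<Rightarrow> bool" where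
  "property_L X Y \<longleftrightarrow> Lindelof_space X \<or>
     (\<forall>f. continuous_map X Y f \<longrightarrow>
        (\<exists>Z. Z \<subseteq> topspace X \<and> Lindelof_space (subtopology X Z) \<and> f ` Z = f ` topspace X))"

end

theory Submission
  imports Defs
begin

text \<open>A manifold is connected and locally path connected, hence path connected. Given
  f : M \<rightarrow> \<real>, the image f(M) is an interval, and countably many of its points bracket all
  of it. Join preimages of each pair of these points by a path: the union Z of the
  countably many (compact) path images is Lindelof, and by the intermediate value theorem
  f(Z) already contains every value between two bracketing points, i.e. all of f(M).\<close>

lemma locally_path_connected_space_open_cover:
  assumes "\<And>x. x \<in> topspace X \<Longrightarrow>
             \<exists>U. openin X U \<and> x \<in> U \<and> locally_path_connected_space (subtopology X U)"
  shows "locally_path_connected_space X"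
  unfolding locally_path_connected_space
proof clarify
  fix V x
  assume V: "openin X V" "x \<in> V"
  then have "x \<in> topspace X"
    using openin_subset by blast
  then obtain U where U: "openin X U" "x \<in> U" "locally_path_connected_space (subtopology X U)"
    using assms by blast
  have "openin (subtopology X U) (U \<inter> V)"
    using U(1) V(1) by (simp add: openin_open_subtopology openin_Int)
  then obtain W where W: "openin (subtopology X U) W" "path_connectedin (subtopology X U) W"
      "x \<in> W" "W \<subseteq> U \<inter> V"
    using U(2,3) V(2) unfolding locally_path_connected_space by blast
  then show "\<exists>W. openin X W \<and> path_connectedin X W \<and> x \<in> W \<and> W \<subseteq> V"
    using U(1) by (auto simp: openin_open_subtopology path_connectedin_subtopology)
qed

lemma connected_locally_path_connected_imp_path_connected_space:
  assumes "connected_space X" "locally_path_connected_space X"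
  shows "path_connected_space X"
  unfolding path_connected_space_iff_path_component
proof clarify
  fix x y
  assume x: "x \<in> topspace X" and y: "y \<in> topspace X"
  have "openin X (Collect (path_component_of X x))" "closedin X (Collect (path_component_of X x))"
    using assms(2) by (simp_all add: openin_path_component_of_locally_path_connected_space
        closedin_path_component_of_locally_path_connected_space)
  moreover have "Collect (path_component_of X x) \<noteq> {}"
    using x path_component_of_refl by fastforce
  ultimately have "Collect (path_component_of X x) = topspace X"
    using assms(1) unfolding connected_space_clopen_in by blast
  then show "path_component_of X x y"
    using y by blast
qed

lemma manifold_imp_locally_path_connected_space:
  assumes "manifold M n"
  shows "locally_path_connected_space M"
proof (rule locally_path_connected_space_open_cover)
  fix x
  assume "x \<in> topspace M"
  then obtain U where "openin M U" "x \<in> U" "subtopology M U homeomorphic_space Euclidean_space n"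
    using assms unfolding manifold_def by blast
  then show "\<exists>U. openin M U \<and> x \<in> U \<and> locally_path_connected_space (subtopology M U)"
    using homeomorphic_locally_path_connected_space locally_path_connected_Euclidean_space by blast
qed

lemma manifold_imp_path_connected_space:
  assumes "manifold M n"
  shows "path_connected_space M"
  using assms connected_locally_path_connected_imp_path_connected_space
    manifold_imp_locally_path_connected_space unfolding manifold_def by blast

lemma real_countable_cofinal_subset:
  fixes T :: "real set"
  obtains S where "countable S" "S \<subseteq> T" "\<And>y. y \<in> T \<Longrightarrow> \<exists>s\<in>S. y \<le> s"
proof -
  define Q where "Q = {q \<in> \<rat>. \<exists>t\<in>T. q < t}"
  have "\<forall>q\<in>Q. \<exists>t. t \<in> T \<and> q < t"
    unfolding Q_def by blast
  then obtain g where g: "\<forall>q\<in>Q. g q \<in> T \<and> q < g q"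
    by metis
  define S where "S = g ` Q \<union> {y \<in> T. \<forall>z\<in>T. z \<le> y}"
  have "countable Q"
    unfolding Q_def by (rule countable_subset[OF _ countable_rat]) blast
  moreover have "countable {y \<in> T. \<forall>z\<in>T. z \<le> y}"
    by (rule countable_subset[of _ "{Sup T}"]) (auto intro: cSup_eq_maximum[symmetric])
  ultimately have "countable S"
    unfolding S_def by blast
  moreover have "S \<subseteq> T"
    unfolding S_def using g by blast
  moreover have "\<exists>s\<in>S. y \<le> s" if y: "y \<in> T" for y
  proof (cases "\<forall>z\<in>T. z \<le> y")
    case True
    then show ?thesis
      using y unfolding S_def by blast
  next
    case False
    then obtain t where "t \<in> T" "y < t"
      by force
    moreover obtain q where "q \<in> \<rat>" "y < q" "q < t"
      using Rats_dense_in_real[OF \<open>y < t\<close>] by blast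
    ultimately have "q \<in> Q"
      unfolding Q_def by blast
    then have "g q \<in> S" "y \<le> g q"
      using g \<open>y < q\<close> unfolding S_def by force+
    then show ?thesis
      by blast
  qed
  ultimately show thesis
    using that by blast
qed

lemma real_countable_bracketing_subset:
  fixes T :: "real set"
  obtains S where "countable S" "S \<subseteq> T" "\<And>y. y \<in> T \<Longrightarrow> \<exists>a\<in>S. \<exists>b\<in>S. a \<le> y \<and> y \<le> b"
proof -
  obtain U where U: "countable U" "U \<subseteq> T" "\<And>y. y \<in> T \<Longrightarrow> \<exists>b\<in>U. y \<le> b"
    using real_countable_cofinal_subset by blast
  obtain L where L: "countable L" "L \<subseteq> uminus ` T" "\<And>y. y \<in> uminus ` T \<Longrightarrow> \<exists>s\<in>L. y \<le> s"
    using real_countable_cofinal_subset by blast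
  have "\<exists>a\<in>uminus ` L. a \<le> y" if "y \<in> T" for y
  proof -
    have "- y \<in> uminus ` T"
      using that by simp
    then obtain s where "s \<in> L" "- y \<le> s"
      using L(3) by blast
    then show ?thesis
      by (metis imageI minus_le_iff)
  qed
  moreover have "uminus ` L \<subseteq> T"
    using L(2) by force
  ultimately show thesis
    using that[of "U \<union> uminus ` L"] U L(1) by blast
qed

lemma Lindelof_space_countable_Union_compactin:
  assumes "countable \<K>" "\<And>K. K \<in> \<K> \<Longrightarrow> compactin X K"
  shows "Lindelof_space (subtopology X (\<Union>\<K>))"
  using assms Lindelof_space_Union compact_imp_Lindelof_space compact_space_subtopology by metis

lemma path_image_covers_value_interval:
  assumes "pathin X g" "continuous_map X euclideanreal f"
  shows "{f (g 0)..f (g 1)} \<subseteq> f ` g ` {0..1}"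
proof -
  have "connected (f ` g ` {0..1})"
    using connectedin_continuous_map_image[OF assms(2) connectedin_path_image[OF assms(1)]]
    by simp
  moreover have "f (g 0) \<in> f ` g ` {0..1}" "f (g 1) \<in> f ` g ` {0..1}"
    by auto
  ultimately show ?thesis
    using connected_contains_Icc by blast
qed

lemma path_connected_space_path_between_values:
  assumes "path_connected_space X" "a \<in> f ` topspace X" "b \<in> f ` topspace X"
  obtains g where "pathin X g" "f (g 0) = a" "f (g 1) = b"
proof -
  obtain x where x: "x \<in> topspace X" "a = f x"
    using assms(2) by (rule imageE) simp
  obtain y where y: "y \<in> topspace X" "b = f y"
    using assms(3) by (rule imageE) simp
  obtain g where "pathin X g" "g 0 = x" "g 1 = y"
    using assms(1) x(1) y(1) unfolding path_connected_space_def by blast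
  then show thesis
    using that x(2) y(2) by simp
qed

lemma path_connected_imp_property_L_real:
  assumes "path_connected_space X"
  shows "property_L X euclideanreal"
  unfolding property_L_def
proof (intro disjI2 allI impI)
  fix f
  assume f: "continuous_map X euclideanreal f"
  obtain S where S: "countable S" "S \<subseteq> f ` topspace X"
      "\<And>y. y \<in> f ` topspace X \<Longrightarrow> \<exists>a\<in>S. \<exists>b\<in>S. a \<le> y \<and> y \<le> b"
    using real_countable_bracketing_subset[of "f ` topspace X"] by blast
  have "\<forall>p\<in>S \<times> S. \<exists>g. pathin X g \<and> f (g 0) = fst p \<and> f (g 1) = snd p"
  proof
    fix p
    assume "p \<in> S \<times> S"
    then have "fst p \<in> f ` topspace X" "snd p \<in> f ` topspace X"
      using S(2) by auto
    then show "\<exists>g. pathin X g \<and> f (g 0) = fst p \<and> f (g 1) = snd p"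
      by (meson path_connected_space_path_between_values[OF assms])
  qed
  then obtain \<gamma> where \<gamma>: "\<And>p. p \<in> S \<times> S \<Longrightarrow> pathin X (\<gamma> p) \<and> f (\<gamma> p 0) = fst p \<and> f (\<gamma> p 1) = snd p"
    by (metis bchoice)
  define Z where "Z = (\<Union>p\<in>S \<times> S. \<gamma> p ` {0..1})"
  have compact: "compactin X (\<gamma> p ` {0..1})" if "p \<in> S \<times> S" for p
    using \<gamma>[OF that] compactin_path_image by blast
  have "Z \<subseteq> topspace X"
    unfolding Z_def using compact compactin_subset_topspace by blast
  moreover have "Lindelof_space (subtopology X Z)"
    unfolding Z_def using S(1) compact by (intro Lindelof_space_countable_Union_compactin) auto
  moreover have "f ` topspace X \<subseteq> f ` Z"
  proof
    fix y
    assume "y \<in> f ` topspace X"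
    then obtain a b where ab: "a \<in> S" "b \<in> S" "a \<le> y" "y \<le> b"
      using S(3) by blast
    then have "pathin X (\<gamma> (a, b))" "y \<in> {f (\<gamma> (a, b) 0)..f (\<gamma> (a, b) 1)}"
      using \<gamma>[of "(a, b)"] by auto
    then have "y \<in> f ` \<gamma> (a, b) ` {0..1}"
      using path_image_covers_value_interval[OF _ f] by blast
    then show "y \<in> f ` Z"
      unfolding Z_def using ab(1,2) by blast
  qed
  ultimately show "\<exists>Z. Z \<subseteq> topspace X \<and> Lindelof_space (subtopology X Z) \<and> f ` Z = f ` topspace X"
    by blast
qed

theorem theorem5p1:
  fixes M :: "'a topology" and n :: nat
  assumes "manifold M n"
  shows "property_L M euclideanreal"
  using path_connected_imp_property_L_real[OF manifold_imp_path_connected_space[OF assms]] .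

end
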